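(* Let $G$ be a $d$-regular bicirculant nut graph of order $n$. Then (i) $n$ and $d$ are both even, and at least one of them is divisible by $4$; and (ii) $d \ge 4$ and $n \ge d+4$.
   Context: A bicirculant graph is a graph that has an automorphism whose cycle decomposition on the vertex set consists of exactly two orbits of equal size. A nut graph is a graph with at least two vertices whose adjacency matrix has eigenvalue $0$ with multiplicity exactly one, such that the corresponding eigenvector has no zero entries. *)

theory Defs
  imports Complex_Main
begin

definition simple_graph :: "nat \<Rightarrow> (nat \<Rightarrow> nat \<Rightarrow> bool) \<Rightarrow> bool" where
  "simple_graph n E \<longleftrightarrow> (\<forall>i j. E i j \<longrightarrow> i < n \<and> j < n \<and> i \<noteq> j \<and> E j i)"

definition regular_graph :: "nat \<Rightarrow> (nat \<Rightarrow> nat \<Rightarrow> bool) \<Rightarrow> nat \<Rightarrow> bool" where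
  "regular_graph n E d \<longleftrightarrow> (\<forall>i<n. card {j. j < n \<and> E i j} = d)"

definition adj_mult :: "nat \<Rightarrow> (nat \<Rightarrow> nat \<Rightarrow> bool) \<Rightarrow> (nat \<Rightarrow> real) \<Rightarrow> nat \<Rightarrow> real" where
  "adj_mult n E x i = (\<Sum>j<n. (if E i j then 1 else 0) * x j)"

definition kernel_vec :: "nat \<Rightarrow> (nat \<Rightarrow> nat \<Rightarrow> bool) \<Rightarrow> (nat \<Rightarrow> real) \<Rightarrow> bool" where
  "kernel_vec n E x \<longleftrightarrow> (\<forall>i\<ge>n. x i = 0) \<and> (\<forall>i<n. adj_mult n E x i = 0)"

text \<open>Nut graph: at least two vertices, eigenvalue 0 of A(G) has multiplicity exactly one
  (A(G) is symmetric, so algebraic = geometric multiplicity = dimension of the kernel),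
  and the spanning kernel vector has no zero entries.\<close>
definition nut_graph :: "nat \<Rightarrow> (nat \<Rightarrow> nat \<Rightarrow> bool) \<Rightarrow> bool" where
  "nut_graph n E \<longleftrightarrow> simple_graph n E \<and> n \<ge> 2 \<and>
     (\<exists>x. kernel_vec n E x \<and> (\<exists>i<n. x i \<noteq> 0) \<and>
          (\<forall>y. kernel_vec n E y \<longrightarrow> (\<exists>c. \<forall>i. y i = c * x i)) \<and>
          (\<forall>i<n. x i \<noteq> 0))"

definition graph_automorphism :: "nat \<Rightarrow> (nat \<Rightarrow> nat \<Rightarrow> bool) \<Rightarrow> (nat \<Rightarrow> nat) \<Rightarrow> bool" where
  "graph_automorphism n E \<sigma> \<longleftrightarrow> bij_betw \<sigma> {0..<n} {0..<n} \<and>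
     (\<forall>i<n. \<forall>j<n. E i j \<longleftrightarrow> E (\<sigma> i) (\<sigma> j))"

definition perm_orbit :: "(nat \<Rightarrow> nat) \<Rightarrow> nat \<Rightarrow> nat set" where
  "perm_orbit \<sigma> i = {(\<sigma> ^^ k) i | k. True}"

definition perm_orbits :: "nat \<Rightarrow> (nat \<Rightarrow> nat) \<Rightarrow> nat set set" where
  "perm_orbits n \<sigma> = perm_orbit \<sigma> ` {0..<n}"

definition bicirculant :: "nat \<Rightarrow> (nat \<Rightarrow> nat \<Rightarrow> bool) \<Rightarrow> bool" where
  "bicirculant n E \<longleftrightarrow> (\<exists>\<sigma>. graph_automorphism n E \<sigma> \<and> card (perm_orbits n \<sigma>) = 2 \<and>
     (\<forall>O1\<in>perm_orbits n \<sigma>. \<forall>O2\<in>perm_orbits n \<sigma>. card O1 = card O2))"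

end

theory Submission
  imports Defs "HOL-Combinatorics.Cycles"
begin

(* Let \<sigma> be the automorphism with orbits U \<ni> u and V \<ni> v of common size m, so n = 2m, and let x
   span the kernel. Since the kernel is one-dimensional, x \<circ> \<sigma> = c x with c = \<plusminus>1, hence x = \<plusminus>x u
   on U and x = \<plusminus>x v on V. Let S and R be the numbers of neighbours of u in U and in V; double
   counting and regularity show that v has R neighbours in U and S in V. The kernel equations at u
   and v then form a singular 2x2 integer system whose entries have the parities of S, R, R, S, so
   S and R have equal parity and d = S + R is even. If m is odd, then c = 1, the system becomes
   S^2 = R^2, and S is even because the neighbours of u inside the circulant on U come in pairs
   \<sigma>^k u, \<sigma>^(m-k) u; hence 4 divides d.
   A nut graph has no isolated vertices and no two vertices with equal neighbourhoods, and every
   proper vertex set U has a vertex with neighbours both inside and outside U (otherwise flipping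
   the sign of x on U gives a second kernel vector). This excludes d = 0 and n = d + 2. For d = 2
   it forces S = R = 1, and then u is a twin of \<sigma>^(m/2) z, where z is its neighbour in V. *)

locale finite_perm =
  fixes A :: "nat set" and \<sigma> :: "nat \<Rightarrow> nat"
  assumes finite_A: "finite A" and bij: "bij_betw \<sigma> A A"
begin

lemma funpow_mem: "i \<in> A \<Longrightarrow> (\<sigma> ^^ k) i \<in> A"
  using bij_betw_funpow[OF bij] bij_betwE by blast

lemma funpow_inj: "i \<in> A \<Longrightarrow> j \<in> A \<Longrightarrow> (\<sigma> ^^ k) i = (\<sigma> ^^ k) j \<Longrightarrow> i = j"
  using bij_betw_imp_inj_on[OF bij_betw_funpow[OF bij]] by (auto dest: inj_onD)

lemma periodic:
  assumes "i \<in> A"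
  shows "\<exists>k>0. (\<sigma> ^^ k) i = i"
proof -
  have "(\<lambda>k. (\<sigma> ^^ k) i) ` {..card A} \<subseteq> A"
    using funpow_mem assms by auto
  hence "\<not> inj_on (\<lambda>k. (\<sigma> ^^ k) i) {..card A}"
    using card_inj_on_le[OF _ _ finite_A] by fastforce
  then obtain a b where "a < b" and ab: "(\<sigma> ^^ a) i = (\<sigma> ^^ b) i"
    unfolding inj_on_def by (metis linorder_neqE_nat)
  have "(\<sigma> ^^ a) ((\<sigma> ^^ (b - a)) i) = (\<sigma> ^^ a) i"
    using ab \<open>a < b\<close> by (metis funpow_add comp_apply le_add_diff_inverse less_imp_le)
  hence "(\<sigma> ^^ (b - a)) i = i"
    using funpow_inj funpow_mem assms by blast
  thus ?thesis using \<open>a < b\<close> by (intro exI[of _ "b - a"]) auto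
qed

lemma least_power_pos: "i \<in> A \<Longrightarrow> 0 < least_power \<sigma> i"
  by (metis periodic least_powerI(2))

lemma funpow_least_power: "i \<in> A \<Longrightarrow> (\<sigma> ^^ least_power \<sigma> i) i = i"
  by (metis periodic least_powerI(1))

lemma funpow_mult_least_power: "i \<in> A \<Longrightarrow> (\<sigma> ^^ (q * least_power \<sigma> i)) i = i"
  by (induction q) (simp_all add: funpow_add funpow_least_power)

lemma funpow_mod_least_power:
  assumes "i \<in> A"
  shows "(\<sigma> ^^ (k mod least_power \<sigma> i)) i = (\<sigma> ^^ k) i"
proof -
  let ?p = "least_power \<sigma> i"
  have "(\<sigma> ^^ k) i = (\<sigma> ^^ (k mod ?p + k div ?p * ?p)) i"
    by (simp only: mod_div_mult_eq)
  also have "\<dots> = (\<sigma> ^^ (k mod ?p)) ((\<sigma> ^^ (k div ?p * ?p)) i)"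
    by (simp add: funpow_add)
  finally show ?thesis
    using funpow_mult_least_power[OF assms] by simp
qed

lemma perm_orbit_eq_image:
  assumes "i \<in> A"
  shows "perm_orbit \<sigma> i = (\<lambda>k. (\<sigma> ^^ k) i) ` {0..<least_power \<sigma> i}"
proof (intro equalityI subsetI)
  fix j assume "j \<in> perm_orbit \<sigma> i"
  then obtain k where "j = (\<sigma> ^^ k) i"
    unfolding perm_orbit_def by blast
  hence "j = (\<sigma> ^^ (k mod least_power \<sigma> i)) i"
    using funpow_mod_least_power[OF assms] by simp
  moreover have "k mod least_power \<sigma> i \<in> {0..<least_power \<sigma> i}"
    using least_power_pos[OF assms] by simp
  ultimately show "j \<in> (\<lambda>k. (\<sigma> ^^ k) i) ` {0..<least_power \<sigma> i}"
    by (intro rev_image_eqI)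
qed (auto simp: perm_orbit_def)

lemma inj_on_funpow_orbit: "i \<in> A \<Longrightarrow> inj_on (\<lambda>k. (\<sigma> ^^ k) i) {0..<least_power \<sigma> i}"
  by (rule inj_on_funpow_least) (auto simp: funpow_least_power dest: least_power_le)

lemma card_perm_orbit: "i \<in> A \<Longrightarrow> card (perm_orbit \<sigma> i) = least_power \<sigma> i"
  by (simp add: perm_orbit_eq_image card_image inj_on_funpow_orbit)

lemma perm_orbit_subset: "i \<in> A \<Longrightarrow> perm_orbit \<sigma> i \<subseteq> A"
  unfolding perm_orbit_def using funpow_mem by auto

lemma finite_perm_orbit: "i \<in> A \<Longrightarrow> finite (perm_orbit \<sigma> i)"
  using perm_orbit_subset finite_A finite_subset by blast

lemma self_in_perm_orbit: "i \<in> perm_orbit \<sigma> i"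
  unfolding perm_orbit_def by (auto intro: exI[of _ 0])

lemma funpow_in_perm_orbit: "j \<in> perm_orbit \<sigma> i \<Longrightarrow> (\<sigma> ^^ k) j \<in> perm_orbit \<sigma> i"
  unfolding perm_orbit_def by (auto simp flip: funpow_add[THEN fun_cong, unfolded comp_apply])

lemma perm_orbit_subset_perm_orbit: "j \<in> perm_orbit \<sigma> i \<Longrightarrow> perm_orbit \<sigma> j \<subseteq> perm_orbit \<sigma> i"
  unfolding perm_orbit_def[of \<sigma> j] using funpow_in_perm_orbit by blast

lemma perm_orbit_eq:
  assumes "i \<in> A" and "j \<in> perm_orbit \<sigma> i"
  shows "perm_orbit \<sigma> j = perm_orbit \<sigma> i"
proof
  show "perm_orbit \<sigma> j \<subseteq> perm_orbit \<sigma> i"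
    using assms(2) by (rule perm_orbit_subset_perm_orbit)
  obtain a where j: "j = (\<sigma> ^^ a) i"
    using assms(2) unfolding perm_orbit_def by blast
  let ?p = "least_power \<sigma> i"
  have "(\<sigma> ^^ (a * (?p - 1))) j = (\<sigma> ^^ (a * ?p)) i"
    using least_power_pos[OF assms(1)]
    by (simp add: j funpow_add[symmetric, THEN fun_cong, unfolded comp_apply] algebra_simps)
  also have "\<dots> = i"
    using funpow_mult_least_power[OF assms(1)] by (simp add: mult.commute)
  finally have "i \<in> perm_orbit \<sigma> j"
    unfolding perm_orbit_def by (intro CollectI exI[of _ "a * (?p - 1)"]) simp
  thus "perm_orbit \<sigma> i \<subseteq> perm_orbit \<sigma> j"
    by (rule perm_orbit_subset_perm_orbit)
qed

lemma two_perm_orbits: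
  assumes "card (perm_orbit \<sigma> ` A) = 2"
  obtains u v where "u \<in> A" "v \<in> A" "perm_orbit \<sigma> u \<inter> perm_orbit \<sigma> v = {}"
    "perm_orbit \<sigma> u \<union> perm_orbit \<sigma> v = A"
proof -
  obtain O1 O2 where "O1 \<noteq> O2" and orbits: "perm_orbit \<sigma> ` A = {O1, O2}"
    using assms by (auto simp: card_2_iff)
  have "O1 \<in> perm_orbit \<sigma> ` A" "O2 \<in> perm_orbit \<sigma> ` A"
    using orbits by auto
  obtain u where u: "O1 = perm_orbit \<sigma> u" "u \<in> A"
    using \<open>O1 \<in> perm_orbit \<sigma> ` A\<close> by (rule imageE)
  obtain v where v: "O2 = perm_orbit \<sigma> v" "v \<in> A"
    using \<open>O2 \<in> perm_orbit \<sigma> ` A\<close> by (rule imageE)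
  have "perm_orbit \<sigma> u \<inter> perm_orbit \<sigma> v = {}"
  proof (rule ccontr)
    assume "perm_orbit \<sigma> u \<inter> perm_orbit \<sigma> v \<noteq> {}"
    then obtain j where j: "j \<in> perm_orbit \<sigma> u" "j \<in> perm_orbit \<sigma> v"
      by blast
    have "perm_orbit \<sigma> u = perm_orbit \<sigma> v"
      using perm_orbit_eq[OF u(2) j(1)] perm_orbit_eq[OF v(2) j(2)] by simp
    thus False
      using u v \<open>O1 \<noteq> O2\<close> by simp
  qed
  moreover have "perm_orbit \<sigma> u \<union> perm_orbit \<sigma> v = A"
  proof
    show "perm_orbit \<sigma> u \<union> perm_orbit \<sigma> v \<subseteq> A"
      using perm_orbit_subset[OF u(2)] perm_orbit_subset[OF v(2)] by simp
    show "A \<subseteq> perm_orbit \<sigma> u \<union> perm_orbit \<sigma> v"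
    proof
      fix i assume "i \<in> A"
      hence "perm_orbit \<sigma> i \<in> {O1, O2}"
        by (rule orbits[THEN equalityD1, THEN subsetD, OF imageI])
      thus "i \<in> perm_orbit \<sigma> u \<union> perm_orbit \<sigma> v"
        using self_in_perm_orbit[of i] u v by auto
    qed
  qed
  ultimately show thesis
    by (rule that[OF u(2) v(2)])
qed

end

lemma even_card_fixpoint_free_involution:
  assumes "finite K" and "\<And>k. k \<in> K \<Longrightarrow> f k \<in> K \<and> f (f k) = k \<and> f k \<noteq> k"
  shows "even (card K)"
  using assms
proof (induction "card K" arbitrary: K rule: less_induct)
  case less
  show ?case
  proof (cases "K = {}")
    case False
    then obtain k where k: "k \<in> K" by blast
    let ?K' = "K - {k, f k}"
    have pair: "{k, f k} \<subseteq> K" "card {k, f k} = 2"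
      using less.prems(2)[OF k] k by auto
    hence card_K': "card K = card ?K' + 2"
      using less.prems(1) card_Diff_subset[of "{k, f k}" K] card_mono[OF less.prems(1) pair(1)]
      by simp
    have "f j \<in> ?K' \<and> f (f j) = j \<and> f j \<noteq> j" if "j \<in> ?K'" for j
    proof -
      have j: "j \<in> K" "j \<noteq> k" "j \<noteq> f k"
        using that by auto
      have fj: "f j \<in> K" "f (f j) = j" "f j \<noteq> j"
        using less.prems(2)[OF j(1)] by auto
      have "f j \<noteq> k"
        using fj(2) j(3) by auto
      moreover have "f j \<noteq> f k"
      proof
        assume "f j = f k"
        hence "f (f j) = f (f k)" by simp
        thus False using fj(2) less.prems(2)[OF k] j(2) by simp
      qed
      ultimately show ?thesis
        using fj by simp
    qed
    hence "even (card ?K')"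
      using less.hyps[of ?K'] less.prems(1) card_K' by simp
    thus ?thesis
      using card_K' by simp
  qed simp
qed

lemma simple_graph_edgeD: "simple_graph n E \<Longrightarrow> E i j \<Longrightarrow> i < n \<and> j < n \<and> i \<noteq> j"
  unfolding simple_graph_def by blast

lemma simple_graph_sym: "simple_graph n E \<Longrightarrow> E i j \<longleftrightarrow> E j i"
  unfolding simple_graph_def by blast

locale simple_graph_automorphism =
  fixes n :: nat and E :: "nat \<Rightarrow> nat \<Rightarrow> bool" and \<sigma> :: "nat \<Rightarrow> nat"
  assumes simple: "simple_graph n E" and automorphism: "graph_automorphism n E \<sigma>"

sublocale simple_graph_automorphism \<subseteq> finite_perm "{0..<n}" \<sigma>
  using automorphism by unfold_locales (auto simp: graph_automorphism_def)

context simple_graph_automorphism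
begin

lemma perm_orbit_less_subset: "p < n \<Longrightarrow> perm_orbit \<sigma> p \<subseteq> {0..<n}"
  using perm_orbit_subset[of p] by simp

lemma image_perm_orbit_subset: "\<sigma> ` perm_orbit \<sigma> p \<subseteq> perm_orbit \<sigma> p"
  using funpow_in_perm_orbit[where k = 1] by auto

lemma funpow_less: "i < n \<Longrightarrow> (\<sigma> ^^ k) i < n"
  using funpow_mem[of i k] by simp

lemma edge_funpow: "i < n \<Longrightarrow> j < n \<Longrightarrow> E ((\<sigma> ^^ k) i) ((\<sigma> ^^ k) j) \<longleftrightarrow> E i j"
proof (induction k)
  case (Suc k)
  then show ?case
    using automorphism funpow_mem unfolding graph_automorphism_def by auto
qed simp

lemma card_neighbours_funpow_le:
  assumes "W \<subseteq> {0..<n}" "\<sigma> ` W \<subseteq> W" "p < n"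
  shows "card {j \<in> W. E p j} \<le> card {j \<in> W. E ((\<sigma> ^^ k) p) j}"
proof (rule card_inj_on_le)
  have "(\<sigma> ^^ k) ` W \<subseteq> W"
    using assms(2) by (induction k) (auto simp: image_subset_iff)
  thus "(\<sigma> ^^ k) ` {j \<in> W. E p j} \<subseteq> {j \<in> W. E ((\<sigma> ^^ k) p) j}"
    using assms edge_funpow by auto
  show "inj_on (\<sigma> ^^ k) {j \<in> W. E p j}"
  proof (rule inj_onI)
    fix a b assume ab: "a \<in> {j \<in> W. E p j}" "b \<in> {j \<in> W. E p j}" "(\<sigma> ^^ k) a = (\<sigma> ^^ k) b"
    have "a \<in> {0..<n}" "b \<in> {0..<n}"
      using assms(1) ab by auto
    thus "a = b"
      using funpow_inj ab(3) by blast
  qed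
  show "finite {j \<in> W. E ((\<sigma> ^^ k) p) j}"
    using assms(1) finite_subset by fastforce
qed

lemma card_neighbours_perm_orbit:
  assumes "W \<subseteq> {0..<n}" "\<sigma> ` W \<subseteq> W" "p < n" "q \<in> perm_orbit \<sigma> p"
  shows "card {j \<in> W. E q j} = card {j \<in> W. E p j}"
proof -
  have "q < n"
    using perm_orbit_less_subset[OF assms(3)] assms(4) by auto
  have "p \<in> perm_orbit \<sigma> q"
    using perm_orbit_eq[of p q] assms(3,4) self_in_perm_orbit[of p] by simp
  then obtain l where "p = (\<sigma> ^^ l) q"
    unfolding perm_orbit_def by blast
  hence "card {j \<in> W. E q j} \<le> card {j \<in> W. E p j}"
    using card_neighbours_funpow_le[OF assms(1,2) \<open>q < n\<close>, of l] by simp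
  moreover obtain k where "q = (\<sigma> ^^ k) p"
    using assms(4) unfolding perm_orbit_def by blast
  hence "card {j \<in> W. E p j} \<le> card {j \<in> W. E q j}"
    using card_neighbours_funpow_le[OF assms(1,2,3), of k] by simp
  ultimately show ?thesis
    by simp
qed

lemma finite_neighbours_in_orbit: "w < n \<Longrightarrow> finite {j \<in> perm_orbit \<sigma> w. E p j}"
  using finite_perm_orbit[of w] by simp

lemma card_edges_between_orbits:
  assumes "w < n" "w' < n"
  shows "card (SIGMA i:perm_orbit \<sigma> w. {j \<in> perm_orbit \<sigma> w'. E i j})
    = card (perm_orbit \<sigma> w) * card {j \<in> perm_orbit \<sigma> w'. E w j}"
proof -
  have "card (SIGMA i:perm_orbit \<sigma> w. {j \<in> perm_orbit \<sigma> w'. E i j})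
      = (\<Sum>i\<in>perm_orbit \<sigma> w. card {j \<in> perm_orbit \<sigma> w'. E i j})"
    using assms finite_perm_orbit by (simp add: card_SigmaI)
  also have "\<dots> = (\<Sum>i\<in>perm_orbit \<sigma> w. card {j \<in> perm_orbit \<sigma> w'. E w j})"
    using card_neighbours_perm_orbit[OF perm_orbit_less_subset[OF assms(2)] image_perm_orbit_subset assms(1)]
    by simp
  finally show ?thesis by simp
qed

lemma no_edges_between_orbits:
  assumes "w < n" "w' < n" "card {j \<in> perm_orbit \<sigma> w'. E w j} = 0"
    "i \<in> perm_orbit \<sigma> w" "j \<in> perm_orbit \<sigma> w'"
  shows "\<not> E i j"
proof -
  have "card {j \<in> perm_orbit \<sigma> w'. E i j} = 0"
    using card_neighbours_perm_orbit[OF perm_orbit_less_subset[OF assms(2)] image_perm_orbit_subset assms(1,4)]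
      assms(3) by simp
  thus ?thesis
    using finite_neighbours_in_orbit[OF assms(2)] assms(5) by auto
qed

definition orbit_symbol :: "nat \<Rightarrow> nat set" where
  "orbit_symbol p = {k \<in> {0..<least_power \<sigma> p}. E p ((\<sigma> ^^ k) p)}"

lemma neighbours_in_own_orbit:
  "p < n \<Longrightarrow> {j \<in> perm_orbit \<sigma> p. E p j} = (\<lambda>k. (\<sigma> ^^ k) p) ` orbit_symbol p"
  using perm_orbit_eq_image[of p] by (simp add: Compr_image_eq orbit_symbol_def)

lemma card_orbit_symbol:
  assumes "p < n"
  shows "card {j \<in> perm_orbit \<sigma> p. E p j} = card (orbit_symbol p)"
proof -
  have "inj_on (\<lambda>k. (\<sigma> ^^ k) p) (orbit_symbol p)"
    by (rule inj_on_subset[OF inj_on_funpow_orbit]) (use assms in \<open>auto simp: orbit_symbol_def\<close>)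
  thus ?thesis
    using neighbours_in_own_orbit[OF assms] by (simp add: card_image)
qed

lemma orbit_symbol_symmetric:
  assumes "p < n" "k \<in> orbit_symbol p"
  shows "0 < k \<and> least_power \<sigma> p - k \<in> orbit_symbol p"
proof -
  let ?m = "least_power \<sigma> p"
  have k: "k < ?m" "E p ((\<sigma> ^^ k) p)"
    using assms(2) unfolding orbit_symbol_def by auto
  have "(\<sigma> ^^ (?m - k)) ((\<sigma> ^^ k) p) = p"
    using k(1) funpow_least_power assms(1)
    by (simp add: funpow_add[symmetric, THEN fun_cong, unfolded comp_apply])
  moreover have "E ((\<sigma> ^^ (?m - k)) p) ((\<sigma> ^^ (?m - k)) ((\<sigma> ^^ k) p))"
    using edge_funpow k assms(1) funpow_mem by auto
  ultimately have "E p ((\<sigma> ^^ (?m - k)) p)"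
    using simple_graph_sym[OF simple] by simp
  moreover have "0 < k"
    using k(2) simple_graph_edgeD[OF simple, of p p] by (cases k) auto
  ultimately show ?thesis
    using k(1) unfolding orbit_symbol_def by auto
qed

lemma even_card_orbit_symbol:
  assumes "p < n" "odd (least_power \<sigma> p)"
  shows "even (card (orbit_symbol p))"
proof (rule even_card_fixpoint_free_involution)
  show "finite (orbit_symbol p)"
    unfolding orbit_symbol_def by simp
  fix k assume k: "k \<in> orbit_symbol p"
  have "k < least_power \<sigma> p"
    using k unfolding orbit_symbol_def by simp
  moreover have "least_power \<sigma> p \<noteq> 2 * k"
    using assms(2) by auto
  ultimately show "least_power \<sigma> p - k \<in> orbit_symbol p \<and> least_power \<sigma> p - (least_power \<sigma> p - k) = k
      \<and> least_power \<sigma> p - k \<noteq> k"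
    using orbit_symbol_symmetric[OF assms(1) k] by auto
qed

lemma single_neighbour_in_own_orbit:
  assumes "p < n" "card {j \<in> perm_orbit \<sigma> p. E p j} = 1"
  obtains h where "least_power \<sigma> p = 2 * h" "{j \<in> perm_orbit \<sigma> p. E p j} = {(\<sigma> ^^ h) p}"
proof -
  have "card (orbit_symbol p) = 1"
    using assms card_orbit_symbol by simp
  then obtain h where h: "orbit_symbol p = {h}"
    by (rule card_1_singletonE)
  moreover have "h \<in> orbit_symbol p"
    using h by simp
  hence "h < least_power \<sigma> p"
    unfolding orbit_symbol_def by simp
  ultimately have "least_power \<sigma> p = 2 * h"
    using orbit_symbol_symmetric[OF assms(1), of h] by auto
  thus thesis
    using that neighbours_in_own_orbit[OF assms(1)] h by simp
qed

lemma adjacent_to_antipode: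
  assumes "p < n" "card {j \<in> perm_orbit \<sigma> p. E p j} = 1" "i \<in> perm_orbit \<sigma> p"
  shows "E i ((\<sigma> ^^ (least_power \<sigma> p div 2)) i)"
proof -
  obtain h where h: "least_power \<sigma> p = 2 * h" "{j \<in> perm_orbit \<sigma> p. E p j} = {(\<sigma> ^^ h) p}"
    using single_neighbour_in_own_orbit[OF assms(1,2)] by blast
  have "(\<sigma> ^^ h) p \<in> {j \<in> perm_orbit \<sigma> p. E p j}"
    using h(2) by simp
  hence "E p ((\<sigma> ^^ h) p)"
    by simp
  moreover obtain k where k: "i = (\<sigma> ^^ k) p"
    using assms(3) unfolding perm_orbit_def by blast
  ultimately have "E i ((\<sigma> ^^ k) ((\<sigma> ^^ h) p))"
    using edge_funpow[OF assms(1) funpow_less[OF assms(1)]] by simp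
  moreover have "(\<sigma> ^^ k) ((\<sigma> ^^ h) p) = (\<sigma> ^^ h) i"
    by (simp add: k funpow_add[symmetric, THEN fun_cong, unfolded comp_apply] add.commute)
  ultimately show ?thesis
    using h(1) by simp
qed

end

lemma adj_mult_eq_sum_neighbours: "adj_mult n E y i = sum y {j. j < n \<and> E i j}"
proof -
  have "adj_mult n E y i = (\<Sum>j<n. if E i j then y j else 0)"
    unfolding adj_mult_def by (intro sum.cong) auto
  also have "\<dots> = sum y {j \<in> {..<n}. E i j}"
    by (rule sum.inter_filter[symmetric]) simp
  also have "{j \<in> {..<n}. E i j} = {j. j < n \<and> E i j}"
    by auto
  finally show ?thesis .
qed

lemma regular_card_neighbours: "regular_graph n E d \<Longrightarrow> p < n \<Longrightarrow> card {j. j < n \<and> E p j} = d"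
  unfolding regular_graph_def by blast

lemma simple_graph_regular_degree_less:
  assumes "simple_graph n E" "regular_graph n E d" "0 < n"
  shows "d < n"
proof -
  have "d = card {j. j < n \<and> E 0 j}"
    using regular_card_neighbours[OF assms(2,3)] by simp
  also have "\<dots> \<le> card ({0..<n} - {0})"
    using simple_graph_edgeD[OF assms(1)] by (intro card_mono) auto
  also have "\<dots> = n - 1"
    using assms(3) by simp
  finally show ?thesis
    using assms(3) by simp
qed

lemma regular_neighbours_eq:
  assumes "regular_graph n E d" "p < n" "B \<subseteq> {j. j < n \<and> E p j}" "card B = d"
  shows "{j. j < n \<and> E p j} = B"
  using assms unfolding regular_graph_def by (intro card_subset_eq[symmetric]) auto

locale nut_kernel =
  fixes n :: nat and E :: "nat \<Rightarrow> nat \<Rightarrow> bool" and x :: "nat \<Rightarrow> real"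
  assumes simple: "simple_graph n E" and two_le_n: "2 \<le> n" and kernel: "kernel_vec n E x"
    and kernel_unique: "\<And>y. kernel_vec n E y \<Longrightarrow> \<exists>c. \<forall>i. y i = c * x i"
    and nowhere_zero: "\<And>i. i < n \<Longrightarrow> x i \<noteq> 0"

lemma nut_graph_obtain_kernel:
  assumes "nut_graph n E"
  obtains x where "nut_kernel n E x"
  using assms unfolding nut_graph_def nut_kernel_def by blast

context nut_kernel
begin

lemma kernel_sum_neighbours: "i < n \<Longrightarrow> sum x {j. j < n \<and> E i j} = 0"
  using kernel unfolding kernel_vec_def adj_mult_eq_sum_neighbours by blast

lemma kernel_vec_vanishes:
  assumes "kernel_vec n E y" "p < n" "y p = 0" "i < n"
  shows "y i = 0"
proof -
  obtain c where c: "\<forall>i. y i = c * x i"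
    using kernel_unique assms(1) by blast
  hence "c = 0"
    using assms(2,3) nowhere_zero by auto
  thus ?thesis
    using c by simp
qed

lemma exists_neighbour:
  assumes "p < n"
  shows "\<exists>j. E p j"
proof (rule ccontr)
  assume isolated: "\<nexists>j. E p j"
  define y where "y i = (if i = p then 1 else (0::real))" for i
  have "sum y {j. j < n \<and> E i j} = 0" for i
    using isolated simple_graph_sym[OF simple, of i p] unfolding y_def by (intro sum.neutral) auto
  hence "kernel_vec n E y"
    unfolding kernel_vec_def adj_mult_eq_sum_neighbours y_def using assms by simp
  moreover define q where "q = (if p = 0 then 1 else 0 :: nat)"
  have "q < n" "q \<noteq> p"
    using two_le_n unfolding q_def by auto
  ultimately have "y p = 0"
    using kernel_vec_vanishes[of y q p] assms unfolding y_def by simp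
  thus False
    unfolding y_def by simp
qed

lemma twins_eq:
  assumes "3 \<le> n" "u < n" "w < n" "\<And>j. j < n \<Longrightarrow> E u j \<longleftrightarrow> E w j"
  shows "u = w"
proof (rule ccontr)
  assume "u \<noteq> w"
  \<comment> \<open>then \<open>e\<^sub>u - e\<^sub>w\<close> is a kernel vector vanishing at any third vertex\<close>
  define y where "y i = (if i = u then 1 else if i = w then -1 else (0::real))" for i
  have "adj_mult n E y i = 0" if "i < n" for i
  proof -
    have "E i u \<longleftrightarrow> E i w"
      using assms(4)[OF that] simple_graph_sym[OF simple, of i u] simple_graph_sym[OF simple, of i w]
      by simp
    have "adj_mult n E y i = (\<Sum>j<n. (if j = u then (if E i u then 1 else 0) else 0)
        - (if j = w then (if E i w then 1 else 0) else (0::real)))"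
      unfolding adj_mult_def y_def using \<open>u \<noteq> w\<close> by (intro sum.cong) auto
    also have "\<dots> = (if E i u then 1 else 0) - (if E i w then 1 else 0)"
      using assms(2,3) by (simp add: sum_subtractf)
    also have "\<dots> = 0"
      using \<open>E i u \<longleftrightarrow> E i w\<close> by simp
    finally show ?thesis .
  qed
  hence "kernel_vec n E y"
    unfolding kernel_vec_def y_def using assms(2,3) by auto
  moreover have "{0, 1, 2} - {u, w} \<noteq> {}"
    by auto
  then obtain z where "z \<in> {0, 1, 2} - {u, w}"
    by blast
  hence "z < n" "z \<noteq> u" "z \<noteq> w"
    using assms(1) by auto
  ultimately show False
    using kernel_vec_vanishes[of y z u] assms(2) unfolding y_def by auto
qed

lemma exists_vertex_with_neighbours_on_both_sides:
  assumes "U \<subseteq> {0..<n}" "u \<in> U" "v < n" "v \<notin> U"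
  shows "\<exists>i<n. (\<exists>j\<in>U. E i j) \<and> (\<exists>j. j < n \<and> j \<notin> U \<and> E i j)"
proof (rule ccontr)
  assume no_split: "\<not> ?thesis"
  \<comment> \<open>then flipping the sign of \<open>x\<close> on \<open>U\<close> gives a kernel vector that is not a multiple of \<open>x\<close>\<close>
  define y where "y i = (if i \<in> U then - x i else x i)" for i
  have "adj_mult n E y i = 0" if "i < n" for i
  proof (cases "\<exists>j\<in>U. E i j")
    case True
    hence "j \<in> U" if "j \<in> {j. j < n \<and> E i j}" for j
      using no_split \<open>i < n\<close> that by blast
    hence "sum y {j. j < n \<and> E i j} = sum (\<lambda>j. - x j) {j. j < n \<and> E i j}"
      unfolding y_def by (intro sum.cong) auto
    thus ?thesis
      using kernel_sum_neighbours[OF that] by (simp add: adj_mult_eq_sum_neighbours sum_negf)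
  next
    case False
    hence "sum y {j. j < n \<and> E i j} = sum x {j. j < n \<and> E i j}"
      unfolding y_def by (intro sum.cong) auto
    thus ?thesis
      using kernel_sum_neighbours[OF that] by (simp add: adj_mult_eq_sum_neighbours)
  qed
  moreover have "y i = 0" if "n \<le> i" for i
    using kernel that unfolding kernel_vec_def y_def by simp
  ultimately obtain c where c: "\<forall>i. y i = c * x i"
    using kernel_unique unfolding kernel_vec_def by blast
  have "u < n"
    using assms(1,2) by auto
  have "(c + 1) * x u = 0"
    using c[rule_format, of u] assms(2) unfolding y_def by (simp add: algebra_simps)
  hence "c = -1"
    using nowhere_zero[OF \<open>u < n\<close>] by simp
  moreover have "(c - 1) * x v = 0"
    using c[rule_format, of v] assms(4) unfolding y_def by (simp add: algebra_simps)
  hence "c = 1"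
    using nowhere_zero[OF assms(3)] by simp
  ultimately show False
    by simp
qed

lemma automorphism_scales_kernel:
  assumes "graph_automorphism n E \<sigma>"
  shows "\<exists>c. \<forall>i<n. x (\<sigma> i) = c * x i"
proof -
  have bij: "bij_betw \<sigma> {..<n} {..<n}"
    and aut: "\<And>i j. i < n \<Longrightarrow> j < n \<Longrightarrow> E (\<sigma> i) (\<sigma> j) = E i j"
    using assms unfolding graph_automorphism_def by (auto simp: atLeast0LessThan)
  define y where "y i = (if i < n then x (\<sigma> i) else 0)" for i
  have "adj_mult n E y i = 0" if "i < n" for i
  proof -
    have "adj_mult n E y i = (\<Sum>j<n. (\<lambda>k. (if E (\<sigma> i) k then 1 else 0) * x k) (\<sigma> j))"
      unfolding adj_mult_def y_def using aut that by (intro sum.cong) auto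
    also have "\<dots> = adj_mult n E x (\<sigma> i)"
      unfolding adj_mult_def using bij by (rule sum.reindex_bij_betw)
    also have "\<dots> = 0"
      using kernel bij_betwE[OF bij] that unfolding kernel_vec_def by auto
    finally show ?thesis .
  qed
  hence "kernel_vec n E y"
    unfolding kernel_vec_def y_def by auto
  then obtain c where c: "\<forall>i. y i = c * x i"
    using kernel_unique by blast
  have "x (\<sigma> i) = c * x i" if "i < n" for i
    using c[rule_format, of i] that unfolding y_def by simp
  thus ?thesis
    by blast
qed

lemma regular_degree_neq_0:
  assumes "regular_graph n E d"
  shows "d \<noteq> 0"
proof -
  have "0 < n"
    using two_le_n by simp
  then obtain j where "E 0 j"
    using exists_neighbour by blast
  hence "j \<in> {j. j < n \<and> E 0 j}"
    using simple_graph_edgeD[OF simple] by blast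
  hence "card {j. j < n \<and> E 0 j} \<noteq> 0"
    by (auto simp: card_eq_0_iff)
  thus ?thesis
    using assms two_le_n unfolding regular_graph_def by simp
qed

lemma regular_neighbours_eq_complement:
  assumes "regular_graph n E (n - 2)" "p < n" "q < n" "p \<noteq> q" "\<not> E p q"
  shows "{j. j < n \<and> E p j} = {0..<n} - {p, q}"
proof (rule card_subset_eq)
  show "{j. j < n \<and> E p j} \<subseteq> {0..<n} - {p, q}"
    using simple_graph_edgeD[OF simple] assms(5) by auto
  show "card {j. j < n \<and> E p j} = card ({0..<n} - {p, q})"
    using assms unfolding regular_graph_def by (simp add: card_Diff_subset)
qed auto

lemma regular_degree_neq_order_minus_2:
  assumes "regular_graph n E d"
  shows "n \<noteq> d + 2"
proof
  assume n: "n = d + 2"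
  \<comment> \<open>then vertex \<open>0\<close> and its unique non-neighbour are twins\<close>
  have "{j. j < n \<and> E 0 j} \<noteq> {0..<n} - {0}"
  proof
    assume "{j. j < n \<and> E 0 j} = {0..<n} - {0}"
    hence "d = card ({0..<n} - {0})"
      using regular_card_neighbours[OF assms, of 0] two_le_n by simp
    thus False
      using n by simp
  qed
  moreover have "{j. j < n \<and> E 0 j} \<subseteq> {0..<n} - {0}"
    using simple_graph_edgeD[OF simple] by auto
  ultimately have "{j. j < n \<and> E 0 j} \<subset> {0..<n} - {0}"
    by (rule psubsetI[rotated])
  then obtain w where "w \<in> ({0..<n} - {0}) - {j. j < n \<and> E 0 j}"
    by (rule psubset_imp_ex_mem[THEN exE])
  hence w: "w < n" "w \<noteq> 0" "\<not> E 0 w"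
    by auto
  have "{j. j < n \<and> E 0 j} = {0..<n} - {0, w}" "{j. j < n \<and> E w j} = {0..<n} - {w, 0}"
    using regular_neighbours_eq_complement assms n w simple_graph_sym[OF simple, of w 0] by simp_all
  hence same: "{j. j < n \<and> E 0 j} = {j. j < n \<and> E w j}"
    by (simp add: insert_commute)
  have "E 0 j \<longleftrightarrow> E w j" if "j < n" for j
  proof -
    have "j \<in> {j. j < n \<and> E 0 j} \<longleftrightarrow> j \<in> {j. j < n \<and> E w j}"
      using same by simp
    thus ?thesis using that by simp
  qed
  moreover have "3 \<le> n"
    using regular_degree_neq_0[OF assms] n by simp
  ultimately show False
    using twins_eq[of 0 w] w by simp
qed

end

lemma sum_plus_minus_parity:
  assumes "finite F" "\<And>j. j \<in> F \<Longrightarrow> f j = a \<or> f j = - a"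
  shows "\<exists>z::int. sum f F = a * of_int z \<and> (even z \<longleftrightarrow> even (card F))"
  using assms
proof (induction F rule: finite_induct)
  case empty
  show ?case by (auto intro: exI[of _ 0])
next
  case (insert j F)
  then obtain z where z: "sum f F = a * of_int z" "even z \<longleftrightarrow> even (card F)"
    by auto
  show ?case
  proof (cases "f j = a")
    case True
    thus ?thesis using insert z by (intro exI[of _ "z + 1"]) (auto simp: algebra_simps)
  next
    case False
    hence "f j = - a" using insert by auto
    thus ?thesis using insert z by (intro exI[of _ "z - 1"]) (auto simp: algebra_simps)
  qed
qed

lemma det2_eq_0_if_kernel:
  fixes a b c e x y :: "'a::field"
  assumes "x * a + y * b = 0" "x * c + y * e = 0" "x \<noteq> 0"
  shows "a * e = b * c"
proof -
  have "x * (a * e - b * c) = e * (x * a + y * b) - b * (x * c + y * e)"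
    by (simp add: algebra_simps)
  thus ?thesis using assms by simp
qed

lemma real_power_eq_1_iff: "0 < m \<Longrightarrow> (c::real) ^ m = 1 \<longleftrightarrow> c = 1 \<or> c = -1 \<and> even m"
proof
  assume "0 < m" "c ^ m = 1"
  hence "\<bar>c\<bar> ^ m = 1 ^ m"
    by (simp flip: power_abs)
  hence "\<bar>c\<bar> = 1"
    by (rule power_eq_iff_eq_base[OF \<open>0 < m\<close> abs_ge_zero zero_le_one, THEN iffD1])
  thus "c = 1 \<or> c = -1 \<and> even m"
    using \<open>c ^ m = 1\<close> by (cases "even m") (auto simp: abs_if neg_one_odd_power split: if_splits)
qed auto

locale regular_bicirculant_nut = nut_kernel n E x + simple_graph_automorphism n E \<sigma>
  for n E x \<sigma> +
  fixes d u v :: nat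
  assumes regular: "regular_graph n E d"
    and u: "u < n" and v: "v < n"
    and orbits_disjoint: "perm_orbit \<sigma> u \<inter> perm_orbit \<sigma> v = {}"
    and orbits_cover: "perm_orbit \<sigma> u \<union> perm_orbit \<sigma> v = {0..<n}"
    and orbits_same_size: "card (perm_orbit \<sigma> u) = card (perm_orbit \<sigma> v)"
begin

abbreviation "U \<equiv> perm_orbit \<sigma> u"
abbreviation "V \<equiv> perm_orbit \<sigma> v"
abbreviation "m \<equiv> least_power \<sigma> u"

lemma least_power_u_pos: "0 < m"
  using least_power_pos[of u] u by simp

lemma card_U: "card U = m"
  using card_perm_orbit[of u] u by simp

lemma card_V: "card V = m"
  using card_U orbits_same_size by simp

lemma least_power_v: "least_power \<sigma> v = m"
  using card_perm_orbit[of v] v card_V by simp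

lemma finite_U: "finite U" and finite_V: "finite V"
  using finite_perm_orbit[of u] finite_perm_orbit[of v] u v by simp_all

lemma order_eq: "n = 2 * m"
proof -
  have "n = card (U \<union> V)"
    using orbits_cover by simp
  also have "\<dots> = card U + card V"
    using orbits_disjoint finite_U finite_V by (simp add: card_Un_disjoint)
  finally show ?thesis
    using card_U card_V by simp
qed

lemma neighbours_split: "{j. j < n \<and> E p j} = {j \<in> U. E p j} \<union> {j \<in> V. E p j}"
  using orbits_cover simple_graph_edgeD[OF simple] by auto

lemma degree_split: "p < n \<Longrightarrow> card {j \<in> U. E p j} + card {j \<in> V. E p j} = d"
  using regular orbits_disjoint finite_neighbours_in_orbit u v
  unfolding regular_graph_def neighbours_split by (subst card_Un_disjoint[symmetric]) auto

lemma kernel_split: "p < n \<Longrightarrow> sum x {j \<in> U. E p j} + sum x {j \<in> V. E p j} = 0"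
  using kernel_sum_neighbours orbits_disjoint finite_neighbours_in_orbit u v
  unfolding neighbours_split by (subst sum.union_disjoint[symmetric]) auto

lemma cross_degree_eq: "card {j \<in> V. E u j} = card {j \<in> U. E v j}"
proof -
  have swap: "prod.swap ` (SIGMA i:W. {j \<in> W'. E i j}) \<subseteq> (SIGMA i:W'. {j \<in> W. E i j})" for W W'
    using simple_graph_sym[OF simple] by auto
  have "card (SIGMA i:U. {j \<in> V. E i j}) \<le> card (SIGMA i:V. {j \<in> U. E i j})"
    using finite_U finite_V by (intro card_inj_on_le[OF inj_swap swap]) simp
  moreover have "card (SIGMA i:V. {j \<in> U. E i j}) \<le> card (SIGMA i:U. {j \<in> V. E i j})"
    using finite_U finite_V by (intro card_inj_on_le[OF inj_swap swap]) simp
  ultimately have "m * card {j \<in> V. E u j} = m * card {j \<in> U. E v j}"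
    using card_edges_between_orbits[OF u v, unfolded card_U]
      card_edges_between_orbits[OF v u, unfolded card_V] by linarith
  thus ?thesis
    using least_power_u_pos by simp
qed

lemma internal_degree_eq: "card {j \<in> U. E u j} = card {j \<in> V. E v j}"
  using degree_split[OF u] degree_split[OF v] cross_degree_eq by simp

lemma kernel_funpow:
  "\<exists>c. (c = 1 \<or> c = -1 \<and> even m) \<and> (\<forall>i<n. \<forall>k. x ((\<sigma> ^^ k) i) = c ^ k * x i)"
proof -
  obtain c where c: "\<And>i. i < n \<Longrightarrow> x (\<sigma> i) = c * x i"
    using automorphism_scales_kernel[OF automorphism] by blast
  have funpow: "x ((\<sigma> ^^ k) i) = c ^ k * x i" if "i < n" for i k
    using that by (induction k) (simp_all add: c funpow_less)
  have "x u = c ^ m * x u"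
    using funpow[OF u, of m] funpow_least_power[of u] u by simp
  hence "c ^ m = 1"
    using nowhere_zero[OF u] by simp
  hence "c = 1 \<or> c = -1 \<and> even m"
    using real_power_eq_1_iff least_power_u_pos by simp
  thus ?thesis
    using funpow by blast
qed

lemma kernel_on_perm_orbit:
  assumes "i < n" "j \<in> perm_orbit \<sigma> i"
  shows "x j = x i \<or> x j = - x i" and "odd m \<Longrightarrow> x j = x i"
proof -
  obtain c where c: "c = 1 \<or> c = -1 \<and> even m" "\<forall>i<n. \<forall>k. x ((\<sigma> ^^ k) i) = c ^ k * x i"
    using kernel_funpow by blast
  obtain k where "j = (\<sigma> ^^ k) i"
    using assms(2) unfolding perm_orbit_def by blast
  hence xj: "x j = c ^ k * x i"
    using c(2) assms(1) by simp
  thus "x j = x i \<or> x j = - x i"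
    using c(1) by (cases "even k") (auto simp: neg_one_odd_power)
  show "odd m \<Longrightarrow> x j = x i"
    using c(1) xj by auto
qed

lemma sum_kernel_neighbours_in_orbit:
  assumes "w < n"
  shows "\<exists>z::int. sum x {j \<in> perm_orbit \<sigma> w. E p j} = x w * of_int z
    \<and> (even z \<longleftrightarrow> even (card {j \<in> perm_orbit \<sigma> w. E p j}))"
  by (rule sum_plus_minus_parity[OF finite_neighbours_in_orbit[OF assms]])
    (use kernel_on_perm_orbit(1)[OF assms] in auto)

lemma internal_cross_degree_parity: "even (card {j \<in> U. E u j}) \<longleftrightarrow> even (card {j \<in> V. E u j})"
proof -
  obtain a where a: "sum x {j \<in> U. E u j} = x u * of_int a" "even a \<longleftrightarrow> even (card {j \<in> U. E u j})"
    using sum_kernel_neighbours_in_orbit[OF u] by blast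
  obtain b where b: "sum x {j \<in> V. E u j} = x v * of_int b" "even b \<longleftrightarrow> even (card {j \<in> V. E u j})"
    using sum_kernel_neighbours_in_orbit[OF v] by blast
  obtain b' where b': "sum x {j \<in> U. E v j} = x u * of_int b'" "even b' \<longleftrightarrow> even (card {j \<in> U. E v j})"
    using sum_kernel_neighbours_in_orbit[OF u] by blast
  obtain c where c: "sum x {j \<in> V. E v j} = x v * of_int c" "even c \<longleftrightarrow> even (card {j \<in> V. E v j})"
    using sum_kernel_neighbours_in_orbit[OF v] by blast
  have "x u * of_int a + x v * of_int b = 0" "x u * of_int b' + x v * of_int c = 0"
    using kernel_split[OF u] kernel_split[OF v] a(1) b(1) b'(1) c(1) by simp_all
  hence "of_int a * of_int c = (of_int b * of_int b' :: real)"
    by (rule det2_eq_0_if_kernel[OF _ _ nowhere_zero[OF u]])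
  hence "a * c = b * b'"
    by (simp flip: of_int_mult)
  moreover have "even (a * c) \<longleftrightarrow> even (card {j \<in> U. E u j})"
    using a(2) c(2) internal_degree_eq by simp
  moreover have "even (b * b') \<longleftrightarrow> even (card {j \<in> V. E u j})"
    using b(2) b'(2) cross_degree_eq by simp
  ultimately show ?thesis
    by simp
qed

lemma even_degree: "even d"
  using internal_cross_degree_parity degree_split[OF u] by auto

lemma four_dvd_order_or_degree: "4 dvd n \<or> 4 dvd d"
proof (cases "even m")
  case True
  thus ?thesis using order_eq by auto
next
  case False
  have sum_eq: "sum x {j \<in> perm_orbit \<sigma> w. E p j} = x w * card {j \<in> perm_orbit \<sigma> w. E p j}"
    if "w < n" for w p
  proof -
    have "sum x {j \<in> perm_orbit \<sigma> w. E p j} = sum (\<lambda>_. x w) {j \<in> perm_orbit \<sigma> w. E p j}"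
      by (rule sum.cong) (use kernel_on_perm_orbit(2)[OF that _ False] in auto)
    thus ?thesis
      by (simp add: mult.commute)
  qed
  have "x u * card {j \<in> U. E u j} + x v * card {j \<in> V. E u j} = 0"
    "x u * card {j \<in> U. E v j} + x v * card {j \<in> V. E v j} = 0"
    using kernel_split[OF u] kernel_split[OF v] sum_eq[OF u] sum_eq[OF v] by simp_all
  hence "real (card {j \<in> U. E u j}) * card {j \<in> V. E v j}
      = real (card {j \<in> V. E u j}) * card {j \<in> U. E v j}"
    by (rule det2_eq_0_if_kernel[OF _ _ nowhere_zero[OF u]])
  hence "card {j \<in> U. E u j} * card {j \<in> U. E u j} = card {j \<in> V. E u j} * card {j \<in> V. E u j}"
    using internal_degree_eq cross_degree_eq by (simp flip: of_nat_mult)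
  hence "card {j \<in> U. E u j} = card {j \<in> V. E u j}"
    using power2_eq_imp_eq[of "card {j \<in> U. E u j}" "card {j \<in> V. E u j}"]
    by (simp add: power2_eq_square)
  moreover have "even (card {j \<in> U. E u j})"
    using even_card_orbit_symbol[OF u False] card_orbit_symbol[OF u] by simp
  ultimately show ?thesis
    using degree_split[OF u] by auto
qed

lemma exists_vertex_adjacent_to_both_orbits: "\<exists>i<n. (\<exists>j\<in>U. E i j) \<and> (\<exists>j\<in>V. E i j)"
proof -
  have "v \<notin> U"
    using orbits_disjoint self_in_perm_orbit[of v] by (auto simp: disjoint_iff)
  then obtain i j j' where "i < n" "j \<in> U" "E i j" "j' < n" "j' \<notin> U" "E i j'"
    using exists_vertex_with_neighbours_on_both_sides[OF perm_orbit_less_subset[OF u] self_in_perm_orbit v]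
    by blast
  moreover have "j' \<in> V"
    using orbits_cover \<open>j' < n\<close> \<open>j' \<notin> U\<close> by auto
  ultimately show ?thesis
    by blast
qed

lemma cross_degree_pos: "card {j \<in> V. E u j} \<noteq> 0"
proof
  assume "card {j \<in> V. E u j} = 0"
  hence no_edge: "\<not> E i j" if "i \<in> U" "j \<in> V" for i j
    using no_edges_between_orbits[OF u v] that by blast
  obtain i j j' where i: "i < n" "j \<in> U" "E i j" "j' \<in> V" "E i j'"
    using exists_vertex_adjacent_to_both_orbits by blast
  hence "i \<in> U \<or> i \<in> V"
    using orbits_cover by auto
  thus False
    using no_edge[of j i] no_edge[of i j'] i simple_graph_sym[OF simple, of i j] by auto
qed

lemma internal_degree_pos: "card {j \<in> U. E u j} \<noteq> 0"
proof
  assume U0: "card {j \<in> U. E u j} = 0"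
  hence V0: "card {j \<in> V. E v j} = 0"
    using internal_degree_eq by simp
  have no_edge: "\<not> E i j" if "i \<in> U \<and> j \<in> U \<or> i \<in> V \<and> j \<in> V" for i j
    using that no_edges_between_orbits[OF u u U0, of i j] no_edges_between_orbits[OF v v V0, of i j]
    by blast
  obtain i j j' where i: "i < n" "j \<in> U" "E i j" "j' \<in> V" "E i j'"
    using exists_vertex_adjacent_to_both_orbits by blast
  hence "i \<in> U \<or> i \<in> V"
    using orbits_cover by auto
  thus False
    using no_edge[of i j] no_edge[of i j'] i by auto
qed

lemma degree_neq_2: "d \<noteq> 2"
proof
  assume "d = 2"
  hence single: "card {j \<in> U. E u j} = 1" "card {j \<in> V. E v j} = 1" "card {j \<in> V. E u j} = 1"
    using degree_split[OF u] internal_degree_pos cross_degree_pos internal_degree_eq by auto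
  obtain h where h: "m = 2 * h" "{j \<in> U. E u j} = {(\<sigma> ^^ h) u}"
    using single_neighbour_in_own_orbit[OF u single(1)] by blast
  obtain z where z: "{j \<in> V. E u j} = {z}"
    using single(3) by (rule card_1_singletonE)
  have "z \<in> {j \<in> V. E u j}"
    using z by simp
  hence "z \<in> V" "E u z" "z < n"
    using perm_orbit_less_subset[OF v] by auto
  define a w where "a = (\<sigma> ^^ h) u" and "w = (\<sigma> ^^ h) z"
  have "a \<in> U"
    unfolding a_def by (rule funpow_in_perm_orbit[OF self_in_perm_orbit])
  have "w \<in> V"
    unfolding w_def using \<open>z \<in> V\<close> by (rule funpow_in_perm_orbit)
  have "w < n"
    unfolding w_def using \<open>z < n\<close> by (rule funpow_less)
  have "E w a"
    using edge_funpow[OF u \<open>z < n\<close>, of h] \<open>E u z\<close> simple_graph_sym[OF simple]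
    unfolding a_def w_def by simp
  moreover have "E w z"
    using adjacent_to_antipode[OF v single(2) \<open>z \<in> V\<close>] least_power_v h(1) simple_graph_sym[OF simple]
    unfolding w_def by simp
  moreover have "a \<noteq> z"
    using \<open>a \<in> U\<close> \<open>z \<in> V\<close> orbits_disjoint by auto
  ultimately have "{j. j < n \<and> E w j} = {a, z}"
    using regular_neighbours_eq[OF regular \<open>w < n\<close>] \<open>d = 2\<close> \<open>z < n\<close> simple_graph_edgeD[OF simple]
    by simp
  moreover have "{j. j < n \<and> E u j} = {a, z}"
    unfolding neighbours_split h(2) z a_def by auto
  ultimately have same: "{j. j < n \<and> E u j} = {j. j < n \<and> E w j}"
    by simp
  have twins: "E u j \<longleftrightarrow> E w j" if "j < n" for j
  proof -
    have "j \<in> {j. j < n \<and> E u j} \<longleftrightarrow> j \<in> {j. j < n \<and> E w j}"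
      using same by simp
    thus ?thesis using that by simp
  qed
  have "3 \<le> n"
    using order_eq h(1) least_power_u_pos by simp
  hence "u = w"
    using twins_eq[OF _ u \<open>w < n\<close> twins] by simp
  thus False
    using \<open>w \<in> V\<close> self_in_perm_orbit[of u] orbits_disjoint by auto
qed


lemma degree_ge_4: "4 \<le> d"
  using even_degree regular_degree_neq_0[OF regular] degree_neq_2 by presburger

lemma order_ge_degree_add_4: "d + 4 \<le> n"
  using simple_graph_regular_degree_less[OF simple regular] u even_degree order_eq
    regular_degree_neq_order_minus_2[OF regular] by presburger

end

lemma bicirculant_orbit_decomposition:
  assumes "simple_graph n E" "bicirculant n E"
  obtains \<sigma> u v where "simple_graph_automorphism n E \<sigma>" "u < n" "v < n"
    "perm_orbit \<sigma> u \<inter> perm_orbit \<sigma> v = {}" "perm_orbit \<sigma> u \<union> perm_orbit \<sigma> v = {0..<n}"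
    "card (perm_orbit \<sigma> u) = card (perm_orbit \<sigma> v)"
proof -
  obtain \<sigma> where aut: "graph_automorphism n E \<sigma>" and two: "card (perm_orbits n \<sigma>) = 2"
    and same_size: "\<forall>O1\<in>perm_orbits n \<sigma>. \<forall>O2\<in>perm_orbits n \<sigma>. card O1 = card O2"
    using assms(2) unfolding bicirculant_def by blast
  interpret simple_graph_automorphism n E \<sigma>
    using assms(1) aut by unfold_locales
  obtain u v where uv: "u \<in> {0..<n}" "v \<in> {0..<n}"
    and "perm_orbit \<sigma> u \<inter> perm_orbit \<sigma> v = {}" "perm_orbit \<sigma> u \<union> perm_orbit \<sigma> v = {0..<n}"
    using two unfolding perm_orbits_def by (rule two_perm_orbits)
  moreover have "card (perm_orbit \<sigma> u) = card (perm_orbit \<sigma> v)"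
    using same_size uv unfolding perm_orbits_def by blast
  ultimately show thesis
    using that[OF simple_graph_automorphism_axioms] by simp
qed

theorem mainTheorem18:
  fixes n d :: nat and E :: "nat \<Rightarrow> nat \<Rightarrow> bool"
  assumes "simple_graph n E" and "regular_graph n E d"
    and "bicirculant n E" and "nut_graph n E"
  shows "even n \<and> even d \<and> (4 dvd n \<or> 4 dvd d) \<and> d \<ge> 4 \<and> n \<ge> d + 4"
proof -
  obtain x where "nut_kernel n E x"
    using assms(4) by (rule nut_graph_obtain_kernel)
  obtain \<sigma> u v where "simple_graph_automorphism n E \<sigma>" "u < n" "v < n"
    "perm_orbit \<sigma> u \<inter> perm_orbit \<sigma> v = {}" "perm_orbit \<sigma> u \<union> perm_orbit \<sigma> v = {0..<n}"
    "card (perm_orbit \<sigma> u) = card (perm_orbit \<sigma> v)"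
    using assms(1,3) by (rule bicirculant_orbit_decomposition)
  then interpret regular_bicirculant_nut n E x \<sigma> d u v
    using \<open>nut_kernel n E x\<close> assms(2)
    by (simp add: regular_bicirculant_nut_def regular_bicirculant_nut_axioms_def)
  show ?thesis
    using order_eq even_degree four_dvd_order_or_degree degree_ge_4 order_ge_degree_add_4 by simp
qed

end
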